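(* Let $\mathcal G$ be a shortest-path game in which $\mathrm{Val}^{\mathrm d}(v)\neq+\infty$ and $\overline{\mathrm{Val}}^{\mathrm m}(v)\neq+\infty$ for all vertices $v$. Let $\sigma_1$ be a fake-optimal NC-strategy of Min, $\sigma_2$ an attractor strategy of Min, $n\in\mathbb N$, and $\sigma=\langle\sigma_1,\sigma_2,\alpha\rangle$ the switching strategy with $\alpha=(2W(|V|-1)+n)|V|+1$. Fix $v_0\in V$. For $p\in(0,1)$ let $\rho_p$ be the memoryless strategy of Min defined below. Then there is $\varepsilon_0>0$ such that for every $\varepsilon\in(0,\varepsilon_0)$ there exists $p_0<1$ such that for every $p\in[p_0,1)$ and every memoryless strategy $\tau$ of Max, $\mathbb E^{\rho_p,\tau}_{v_0}(\mathrm{TP})\le \mathrm{Val}^{\sigma}(v_0)+\varepsilon$.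
   Context: A shortest-path game is $\mathcal G=(V_{\mathrm{Max}},V_{\mathrm{Min}},T,E,w)$ with finite $V=V_{\mathrm{Max}}\uplus V_{\mathrm{Min}}\uplus T$, edges $E\subseteq (V\setminus T)\times V$ with every non-target vertex having a successor, and integer weights $w\colon E\to\mathbb Z$; $W=\max_{e\in E}|w(e)|$. Plays from $v$ are finite paths ending at their first visit to $T$ (total payoff $\mathrm{TP}$ = sum of weights) or infinite paths avoiding $T$ ($\mathrm{TP}=+\infty$). Strategies of Min (resp. Max) map finite paths ending in $V_{\mathrm{Min}}$ (resp. $V_{\mathrm{Max}}$) to distributions on successors of the last vertex; deterministic = always Dirac, memoryless = depends only on the last vertex. For deterministic $\sigma,\tau$, $\mathrm{out}(v,\sigma,\tau)$ is the unique conforming play; $\mathrm{Val}^\sigma(v)=\sup_\tau \mathrm{TP}(\mathrm{out}(v,\sigma,\tau))$ over deterministic $\tau$, and $\mathrm{Val}^{\mathrm d}(v)=\inf_\sigma\mathrm{Val}^\sigma(v)$. For memoryless $\rho$ (Min) and $\tau$ (Max), $\mathbb E^{\rho,\tau}_v(\mathrm{TP})$ is the expected total payoff in the induced Markov chain; $\overline{\mathrm{Val}}^{\mathrm m}(v)=\inf_\rho\sup_\tau\mathbb E^{\rho,\tau}_v(\mathrm{TP})$ over memoryless strategies. A play/path conforms to a memoryless deterministic Min strategy $\sigma_1$ if every Min vertex $u$ on it (except possibly the last) is followed by $\sigma_1(u)$. An NC-strategy is a memoryless deterministic Min strategy $\sigma_1$ such that every cycle conforming to $\sigma_1$ has negative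 total weight; it is fake-optimal if for all $v$, $\sup\{\mathrm{TP}(\pi)\mid \pi \text{ a finite play from } v \text{ ending in } T \text{ conforming to } \sigma_1\}\le \mathrm{Val}^{\mathrm d}(v)$ (with $\sup\emptyset=-\infty$). An attractor strategy is a memoryless deterministic Min strategy $\sigma_2$ guaranteeing that every conforming play reaches $T$. The switching strategy $\langle\sigma_1,\sigma_2,\alpha\rangle$ is the deterministic strategy that plays $\sigma_1$ and switches to $\sigma_2$ as soon as the length of the current finite play exceeds $\alpha$. The strategy $\rho_p$: for $v\in V_{\mathrm{Min}}$, if the strongly connected component of $v$ in the graph $(V,E)$ contains no cycle of negative total weight, $\rho_p(v)$ is the Dirac distribution on $\sigma_1(v)$; otherwise, if $\sigma_1(v)\ne\sigma_2(v)$, $\rho_p(v)$ chooses $\sigma_1(v)$ with probability $p$ and $\sigma_2(v)$ with probability $1-p$, and if $\sigma_1(v)=\sigma_2(v)$ it chooses that vertex with probability 1. *)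

theory Defs
  imports "HOL-Probability.Probability"
begin

record 'v spgame =
  VMax :: "'v set"
  VMin :: "'v set"
  Tgt  :: "'v set"
  Edg  :: "('v \<times> 'v) set"
  wt   :: "'v \<times> 'v \<Rightarrow> int"

definition Vs :: "'v spgame \<Rightarrow> 'v set" where
  "Vs G = VMax G \<union> VMin G \<union> Tgt G"

definition well_formed :: "'v spgame \<Rightarrow> bool" where
  "well_formed G \<longleftrightarrow> finite (Vs G)
     \<and> VMax G \<inter> VMin G = {} \<and> VMax G \<inter> Tgt G = {} \<and> VMin G \<inter> Tgt G = {}
     \<and> Edg G \<subseteq> (Vs G - Tgt G) \<times> Vs G
     \<and> (\<forall>v \<in> Vs G - Tgt G. \<exists>u. (v, u) \<in> Edg G)"

definition maxW :: "'v spgame \<Rightarrow> int" where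
  "maxW G = Max (insert 0 ((\<lambda>e. \<bar>wt G e\<bar>) ` Edg G))"

definition is_path :: "'v spgame \<Rightarrow> 'v list \<Rightarrow> bool" where
  "is_path G xs \<longleftrightarrow> xs \<noteq> [] \<and> set xs \<subseteq> Vs G
     \<and> (\<forall>i. Suc i < length xs \<longrightarrow> (xs ! i, xs ! Suc i) \<in> Edg G)"

definition path_weight :: "'v spgame \<Rightarrow> 'v list \<Rightarrow> int" where
  "path_weight G xs = (\<Sum>i<length xs - 1. wt G (xs ! i, xs ! Suc i))"

definition fin_play :: "'v spgame \<Rightarrow> 'v \<Rightarrow> 'v list \<Rightarrow> bool" where
  "fin_play G v xs \<longleftrightarrow> is_path G xs \<and> hd xs = v \<and> last xs \<in> Tgt G
     \<and> (\<forall>i. Suc i < length xs \<longrightarrow> xs ! i \<notin> Tgt G)"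

definition is_cycle :: "'v spgame \<Rightarrow> 'v list \<Rightarrow> bool" where
  "is_cycle G xs \<longleftrightarrow> is_path G xs \<and> length xs \<ge> 2 \<and> hd xs = last xs"

definition conforms :: "'v spgame \<Rightarrow> ('v \<Rightarrow> 'v) \<Rightarrow> 'v list \<Rightarrow> bool" where
  "conforms G s xs \<longleftrightarrow> (\<forall>i. Suc i < length xs \<longrightarrow> xs ! i \<in> VMin G \<longrightarrow> xs ! Suc i = s (xs ! i))"

definition det_strat_Min :: "'v spgame \<Rightarrow> ('v list \<Rightarrow> 'v) \<Rightarrow> bool" where
  "det_strat_Min G \<sigma> \<longleftrightarrow> (\<forall>h. h \<noteq> [] \<longrightarrow> last h \<in> VMin G \<longrightarrow> (last h, \<sigma> h) \<in> Edg G)"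

definition det_strat_Max :: "'v spgame \<Rightarrow> ('v list \<Rightarrow> 'v) \<Rightarrow> bool" where
  "det_strat_Max G \<tau> \<longleftrightarrow> (\<forall>h. h \<noteq> [] \<longrightarrow> last h \<in> VMax G \<longrightarrow> (last h, \<tau> h) \<in> Edg G)"

text \<open>Prefixes of the outcome out(v,\<sigma>,\<tau>); stutters once T is reached.\<close>
fun out_hist :: "'v spgame \<Rightarrow> 'v \<Rightarrow> ('v list \<Rightarrow> 'v) \<Rightarrow> ('v list \<Rightarrow> 'v) \<Rightarrow> nat \<Rightarrow> 'v list" where
  "out_hist G v \<sigma> \<tau> 0 = [v]"
| "out_hist G v \<sigma> \<tau> (Suc n) =
     (let h = out_hist G v \<sigma> \<tau> n in
      if last h \<in> Tgt G then h
      else h @ [if last h \<in> VMin G then \<sigma> h else \<tau> h])"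

definition TP_out :: "'v spgame \<Rightarrow> 'v \<Rightarrow> ('v list \<Rightarrow> 'v) \<Rightarrow> ('v list \<Rightarrow> 'v) \<Rightarrow> ereal" where
  "TP_out G v \<sigma> \<tau> =
     (if \<exists>n. last (out_hist G v \<sigma> \<tau> n) \<in> Tgt G
      then ereal (real_of_int (path_weight G
             (out_hist G v \<sigma> \<tau> (LEAST n. last (out_hist G v \<sigma> \<tau> n) \<in> Tgt G))))
      else \<infinity>)"

definition Val_strat :: "'v spgame \<Rightarrow> ('v list \<Rightarrow> 'v) \<Rightarrow> 'v \<Rightarrow> ereal" where
  "Val_strat G \<sigma> v = (SUP \<tau> \<in> {\<tau>. det_strat_Max G \<tau>}. TP_out G v \<sigma> \<tau>)"

definition Val_d :: "'v spgame \<Rightarrow> 'v \<Rightarrow> ereal" where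
  "Val_d G v = (INF \<sigma> \<in> {\<sigma>. det_strat_Min G \<sigma>}. Val_strat G \<sigma> v)"

definition ml_strat_Min :: "'v spgame \<Rightarrow> ('v \<Rightarrow> 'v pmf) \<Rightarrow> bool" where
  "ml_strat_Min G \<rho> \<longleftrightarrow> (\<forall>u \<in> VMin G. \<forall>x \<in> set_pmf (\<rho> u). (u, x) \<in> Edg G)"

definition ml_strat_Max :: "'v spgame \<Rightarrow> ('v \<Rightarrow> 'v pmf) \<Rightarrow> bool" where
  "ml_strat_Max G \<tau> \<longleftrightarrow> (\<forall>u \<in> VMax G. \<forall>x \<in> set_pmf (\<tau> u). (u, x) \<in> Edg G)"

definition path_prob :: "'v spgame \<Rightarrow> ('v \<Rightarrow> 'v pmf) \<Rightarrow> ('v \<Rightarrow> 'v pmf) \<Rightarrow> 'v list \<Rightarrow> real" where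
  "path_prob G \<rho> \<tau> xs =
     (\<Prod>i<length xs - 1. pmf (if xs ! i \<in> VMin G then \<rho> (xs ! i) else \<tau> (xs ! i)) (xs ! Suc i))"

text \<open>Expected total payoff in the induced Markov chain: +\<infinity> if T is not reached almost
  surely; otherwise the (absolutely convergent) sum over finite plays.\<close>
definition exp_TP :: "'v spgame \<Rightarrow> ('v \<Rightarrow> 'v pmf) \<Rightarrow> ('v \<Rightarrow> 'v pmf) \<Rightarrow> 'v \<Rightarrow> ereal" where
  "exp_TP G \<rho> \<tau> v =
     (if (\<Sum>\<^sub>\<infinity>xs \<in> {xs. fin_play G v xs}. path_prob G \<rho> \<tau> xs) = 1
      then ereal (\<Sum>\<^sub>\<infinity>xs \<in> {xs. fin_play G v xs}.
                     path_prob G \<rho> \<tau> xs * real_of_int (path_weight G xs))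
      else \<infinity>)"

definition Val_m_bar :: "'v spgame \<Rightarrow> 'v \<Rightarrow> ereal" where
  "Val_m_bar G v = (INF \<rho> \<in> {\<rho>. ml_strat_Min G \<rho>}.
                      SUP \<tau> \<in> {\<tau>. ml_strat_Max G \<tau>}. exp_TP G \<rho> \<tau> v)"

definition md_strat_Min :: "'v spgame \<Rightarrow> ('v \<Rightarrow> 'v) \<Rightarrow> bool" where
  "md_strat_Min G s \<longleftrightarrow> (\<forall>u \<in> VMin G. (u, s u) \<in> Edg G)"

definition NC_strategy :: "'v spgame \<Rightarrow> ('v \<Rightarrow> 'v) \<Rightarrow> bool" where
  "NC_strategy G s \<longleftrightarrow> md_strat_Min G s
     \<and> (\<forall>xs. is_cycle G xs \<longrightarrow> conforms G s xs \<longrightarrow> path_weight G xs < 0)"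

definition fake_optimal :: "'v spgame \<Rightarrow> ('v \<Rightarrow> 'v) \<Rightarrow> bool" where
  "fake_optimal G s \<longleftrightarrow> (\<forall>v \<in> Vs G.
     Sup {ereal (real_of_int (path_weight G xs)) | xs. fin_play G v xs \<and> conforms G s xs} \<le> Val_d G v)"

definition attractor_strategy :: "'v spgame \<Rightarrow> ('v \<Rightarrow> 'v) \<Rightarrow> bool" where
  "attractor_strategy G s \<longleftrightarrow> md_strat_Min G s
     \<and> (\<forall>f :: nat \<Rightarrow> 'v. f 0 \<in> Vs G \<longrightarrow> (\<forall>i. (f i, f (Suc i)) \<in> Edg G)
          \<longrightarrow> (\<forall>i. f i \<in> VMin G \<longrightarrow> f (Suc i) = s (f i)) \<longrightarrow> (\<exists>i. f i \<in> Tgt G))"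

text \<open>Switching strategy: the length of a finite play h is its number of edges, length h - 1.\<close>
definition switching :: "('v \<Rightarrow> 'v) \<Rightarrow> ('v \<Rightarrow> 'v) \<Rightarrow> nat \<Rightarrow> 'v list \<Rightarrow> 'v" where
  "switching s1 s2 \<alpha> h = (if length h - 1 > \<alpha> then s2 (last h) else s1 (last h))"

definition scc :: "'v spgame \<Rightarrow> 'v \<Rightarrow> 'v set" where
  "scc G v = {u. (v, u) \<in> (Edg G)\<^sup>* \<and> (u, v) \<in> (Edg G)\<^sup>*}"

definition scc_has_neg_cycle :: "'v spgame \<Rightarrow> 'v \<Rightarrow> bool" where
  "scc_has_neg_cycle G v \<longleftrightarrow>
     (\<exists>xs. is_cycle G xs \<and> set xs \<subseteq> scc G v \<and> path_weight G xs < 0)"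

definition rho_p :: "'v spgame \<Rightarrow> ('v \<Rightarrow> 'v) \<Rightarrow> ('v \<Rightarrow> 'v) \<Rightarrow> real \<Rightarrow> 'v \<Rightarrow> 'v pmf" where
  "rho_p G s1 s2 p v =
     (if \<not> scc_has_neg_cycle G v then return_pmf (s1 v)
      else if s1 v \<noteq> s2 v then map_pmf (\<lambda>b. if b then s1 v else s2 v) (bernoulli_pmf p)
      else return_pmf (s1 v))"

end

theory Submission
  imports Defs
begin

(*
  Fix eps > 0, a step bonus beta > 0 with beta * |V| <= min 1 eps, and a penalty M. Let phi v be the
  supremum, over sigma1-conforming paths from v that stop at their first target, of
  weight + beta * (number of edges) - M * [the path does not end in T].
  Every sigma1-conforming cycle has weight <= -1 while it earns a bonus of at most beta * |V| <= 1,
  so cutting cycles never decreases this value: phi is attained on paths with at most |V| vertices,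
  hence bounded, and once M is large fake-optimality of sigma1 gives phi v <= Val^d v + eps.
  Along every edge compatible with sigma1 we have w(u,x) + beta + phi x <= phi u. Hence phi
  decreases in expectation at Max vertices; at Min vertices rho_p follows sigma1 with probability
  at least p, and for p close to 1 the loss beta on that branch outweighs the bounded gain on the
  others.
  Under rho_p and any memoryless tau the target is reached almost surely, with geometrically
  decaying survival probability: an infinite path in the support visits the vertices whose SCC has
  no negative cycle only finitely often (a revisit would close a sigma1-conforming cycle inside such
  an SCC), and from then on it follows the attractor sigma2. Optional stopping for the
  supermartingale "weight so far + phi" gives E(TP) <= phi v0 <= Val^d v0 + eps <= Val^sigma v0 + eps.
*)

section \<open>Paths, their weights and their probabilities\<close>

lemma successively_iff_nth:
  "successively P xs \<longleftrightarrow> (\<forall>i. Suc i < length xs \<longrightarrow> P (xs ! i) (xs ! Suc i))"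
  by (induction P xs rule: successively.induct) (auto simp: nth_Cons' less_Suc_eq_0_disj)

lemma successively_append_Cons_iff:
  "successively P (xs @ y # zs) \<longleftrightarrow> successively P (xs @ [y]) \<and> successively P (y # zs)"
  by (auto simp: successively_append_iff)

lemma successively_remove_cycle:
  assumes "successively P (a @ y # b @ y # e)"
  shows "successively P (a @ y # e) \<and> successively P (y # b @ [y])"
proof -
  have "successively P (a @ [y])" "successively P ((y # b) @ [y])" "successively P (y # e)"
    using assms successively_append_Cons_iff[of P a y "b @ y # e"]
      successively_append_Cons_iff[of P "y # b" y e]
    by auto
  then show ?thesis using successively_append_Cons_iff[of P a y e] by simp
qed

lemma list_repeats_within_card:
  assumes "finite A" and "set xs \<subseteq> A" and "card A < length xs"
  obtains a y b e where "xs = a @ y # b @ y # e" and "length b < card A"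
proof -
  let ?n = "card A"
  have "\<not> distinct (take (Suc ?n) xs)"
  proof
    assume "distinct (take (Suc ?n) xs)"
    then have "card (set (take (Suc ?n) xs)) = Suc ?n" using assms(3) by (simp add: distinct_card)
    moreover have "set (take (Suc ?n) xs) \<subseteq> A" using set_take_subset assms(2) by fastforce
    ultimately show False using card_mono[OF assms(1), of "set (take (Suc ?n) xs)"] by simp
  qed
  then obtain a y b c where take_eq: "take (Suc ?n) xs = a @ [y] @ b @ [y] @ c"
    using not_distinct_decomp by blast
  have "xs = a @ y # b @ y # (c @ drop (Suc ?n) xs)"
    using append_take_drop_id[of "Suc ?n" xs] take_eq by simp
  moreover have "length (take (Suc ?n) xs) = Suc ?n" using assms(3) by simp
  with take_eq have "length b < ?n" by simp
  ultimately show ?thesis using that by blast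
qed

lemma set_butlast_conv_nth: "set (butlast xs) = {xs ! i |i. Suc i < length xs}"
proof -
  have "set (butlast xs) = {butlast xs ! i |i. i < length (butlast xs)}"
    by (simp add: set_conv_nth)
  also have "\<dots> = {xs ! i |i. Suc i < length xs}"
    by (intro Collect_cong ex_cong1) (auto simp: nth_butlast)
  finally show ?thesis .
qed

lemma is_path_iff_successively:
  "is_path G xs \<longleftrightarrow> xs \<noteq> [] \<and> set xs \<subseteq> Vs G \<and> successively (\<lambda>a b. (a, b) \<in> Edg G) xs"
  unfolding is_path_def successively_iff_nth by auto

lemma conforms_iff_successively:
  "conforms G s xs \<longleftrightarrow> successively (\<lambda>a b. a \<in> VMin G \<longrightarrow> b = s a) xs"
  unfolding conforms_def successively_iff_nth by auto

lemma fin_play_iff: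
  "fin_play G v xs \<longleftrightarrow>
     is_path G xs \<and> hd xs = v \<and> last xs \<in> Tgt G \<and> set (butlast xs) \<inter> Tgt G = {}"
  unfolding fin_play_def set_butlast_conv_nth by blast

lemma path_weight_Nil [simp]: "path_weight G [] = 0"
  and path_weight_single [simp]: "path_weight G [x] = 0"
  and path_weight_Cons_Cons [simp]:
    "path_weight G (x # y # xs) = wt G (x, y) + path_weight G (y # xs)"
  by (simp_all add: path_weight_def sum.lessThan_Suc_shift del: sum.lessThan_Suc)

lemma path_weight_snoc:
  "xs \<noteq> [] \<Longrightarrow> path_weight G (xs @ [x]) = path_weight G xs + wt G (last xs, x)"
  by (induction xs rule: induct_list012) auto

lemma path_weight_append_Cons:
  "path_weight G (xs @ y # zs) = path_weight G (xs @ [y]) + path_weight G (y # zs)"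
  by (induction xs rule: induct_list012) auto

definition walk_prob :: "('v \<Rightarrow> 'v pmf) \<Rightarrow> 'v list \<Rightarrow> real" where
  "walk_prob D xs = (\<Prod>i<length xs - 1. pmf (D (xs ! i)) (xs ! Suc i))"

definition induced_kernel :: "'v spgame \<Rightarrow> ('v \<Rightarrow> 'v pmf) \<Rightarrow> ('v \<Rightarrow> 'v pmf) \<Rightarrow> 'v \<Rightarrow> 'v pmf" where
  "induced_kernel G \<rho> \<tau> u = (if u \<in> VMin G then \<rho> u else \<tau> u)"

lemma path_prob_eq_walk_prob: "path_prob G \<rho> \<tau> = walk_prob (induced_kernel G \<rho> \<tau>)"
  by (simp add: fun_eq_iff path_prob_def walk_prob_def induced_kernel_def)

lemma walk_prob_Nil [simp]: "walk_prob D [] = 1"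
  and walk_prob_single [simp]: "walk_prob D [x] = 1"
  and walk_prob_Cons_Cons [simp]: "walk_prob D (x # y # xs) = pmf (D x) y * walk_prob D (y # xs)"
  by (simp_all add: walk_prob_def prod.lessThan_Suc_shift del: prod.lessThan_Suc)

lemma walk_prob_snoc:
  "xs \<noteq> [] \<Longrightarrow> walk_prob D (xs @ [x]) = walk_prob D xs * pmf (D (last xs)) x"
  by (induction xs rule: induct_list012) auto

lemma walk_prob_nonneg: "0 \<le> walk_prob D xs"
  by (simp add: walk_prob_def prod_nonneg)

lemma Edg_subset: "well_formed G \<Longrightarrow> (u, x) \<in> Edg G \<Longrightarrow> u \<in> Vs G - Tgt G \<and> x \<in> Vs G"
  unfolding well_formed_def by blast

lemma finite_Edg: "well_formed G \<Longrightarrow> finite (Edg G)"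
  unfolding well_formed_def by (meson finite_SigmaI finite_subset Diff_subset)

lemma finite_successors:
  assumes "well_formed G"
  shows "finite {x. (u, x) \<in> Edg G}"
proof (rule finite_subset)
  show "{x. (u, x) \<in> Edg G} \<subseteq> Vs G" using Edg_subset[OF assms] by blast
  show "finite (Vs G)" using assms by (simp add: well_formed_def)
qed

lemma abs_wt_le_maxW: "well_formed G \<Longrightarrow> e \<in> Edg G \<Longrightarrow> \<bar>wt G e\<bar> \<le> maxW G"
  unfolding maxW_def by (intro Max_ge) (auto simp: finite_Edg)

lemma maxW_nonneg: "well_formed G \<Longrightarrow> 0 \<le> maxW G"
  unfolding maxW_def by (intro Max_ge) (auto simp: finite_Edg)

lemma abs_path_weight_le:
  assumes "well_formed G" and "is_path G xs"
  shows "\<bar>real_of_int (path_weight G xs)\<bar> \<le> real_of_int (maxW G) * (real (length xs) - 1)"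
  using assms(2)
proof (induction xs rule: induct_list012)
  case (3 x y zs)
  then have "\<bar>wt G (x, y)\<bar> \<le> maxW G" "is_path G (y # zs)"
    using abs_wt_le_maxW[OF assms(1)] by (auto simp: is_path_iff_successively)
  with "3.IH"(2) show ?case by (simp add: algebra_simps)
qed (simp_all add: is_path_def)

section \<open>Plays of the Markov chain induced by memoryless strategies\<close>

locale edge_chain =
  fixes G :: "'v spgame" and D :: "'v \<Rightarrow> 'v pmf"
  assumes well_formed: "well_formed G"
    and D_supported: "\<And>u. u \<in> Vs G - Tgt G \<Longrightarrow> set_pmf (D u) \<subseteq> {x. (u, x) \<in> Edg G}"
begin

definition succs :: "'v \<Rightarrow> 'v set" where
  "succs u = {x. (u, x) \<in> Edg G}"

lemma finite_Vs: "finite (Vs G)"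
  using well_formed by (simp add: well_formed_def)

lemma succs_subset: "succs u \<subseteq> Vs G"
  using Edg_subset[OF well_formed] unfolding succs_def by blast

lemma finite_succs: "finite (succs u)"
  unfolding succs_def using finite_successors[OF well_formed] .

lemma sum_pmf_succs: "u \<in> Vs G - Tgt G \<Longrightarrow> (\<Sum>x\<in>succs u. pmf (D u) x) = 1"
  using D_supported[of u] by (intro sum_pmf_eq_1 finite_succs) (auto simp: succs_def)

text \<open>The index \<open>N\<close> counts edges: the paths in \<open>alive_paths v N\<close> and
  \<open>plays_of_length v N\<close> have \<open>N + 1\<close> vertices.\<close>

definition alive_paths :: "'v \<Rightarrow> nat \<Rightarrow> 'v list set" where
  "alive_paths v N = {xs. length xs = Suc N \<and> hd xs = v \<and> is_path G xs \<and> set xs \<inter> Tgt G = {}}"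

definition plays_of_length :: "'v \<Rightarrow> nat \<Rightarrow> 'v list set" where
  "plays_of_length v N = {xs. fin_play G v xs \<and> length xs = Suc N}"

definition mass :: "'v list set \<Rightarrow> real" where
  "mass A = (\<Sum>xs\<in>A. walk_prob D xs)"

lemma mass_nonneg: "0 \<le> mass A"
  unfolding mass_def by (intro sum_nonneg walk_prob_nonneg)

lemma finite_paths_of_length: "finite {xs. is_path G xs \<and> length xs = Suc N}"
proof -
  have "{xs. is_path G xs \<and> length xs = Suc N} \<subseteq> {xs. set xs \<subseteq> Vs G \<and> length xs = Suc N}"
    unfolding is_path_def by auto
  then show ?thesis using finite_lists_length_eq[OF finite_Vs] finite_subset by blast
qed

lemma finite_alive_paths: "finite (alive_paths v N)"
  by (rule finite_subset[OF _ finite_paths_of_length]) (auto simp: alive_paths_def)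

lemma finite_plays_of_length: "finite (plays_of_length v N)"
  by (rule finite_subset[OF _ finite_paths_of_length]) (auto simp: plays_of_length_def fin_play_def)

lemma alive_paths_0: "alive_paths v 0 = (if v \<in> Vs G - Tgt G then {[v]} else {})"
  unfolding alive_paths_def is_path_def by (auto simp: length_Suc_conv)

lemma plays_of_length_0: "plays_of_length v 0 = (if v \<in> Tgt G then {[v]} else {})"
  unfolding plays_of_length_def fin_play_def is_path_def by (auto simp: length_Suc_conv Vs_def)

lemma alive_paths_last:
  "ys \<in> alive_paths v N \<Longrightarrow> ys \<noteq> [] \<and> last ys \<in> Vs G - Tgt G"
  unfolding alive_paths_def is_path_def using last_in_set by fastforce

lemma alive_paths_empty: "v \<notin> Vs G - Tgt G \<Longrightarrow> alive_paths v N = {}"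
  unfolding alive_paths_def is_path_def using hd_in_set by fastforce

lemma snoc_in_alive_paths_Suc_iff:
  "ys @ [x] \<in> alive_paths v (Suc N) \<longleftrightarrow> ys \<in> alive_paths v N \<and> x \<in> succs (last ys) - Tgt G"
  by (cases "ys = []")
    (auto simp: alive_paths_def is_path_iff_successively succs_def successively_append_iff
      dest: Edg_subset[OF well_formed])

lemma snoc_in_plays_of_length_Suc_iff:
  "ys @ [x] \<in> plays_of_length v (Suc N) \<longleftrightarrow> ys \<in> alive_paths v N \<and> x \<in> succs (last ys) \<inter> Tgt G"
  by (cases "ys = []")
    (auto simp: alive_paths_def plays_of_length_def fin_play_iff is_path_iff_successively
      succs_def successively_append_iff dest: Edg_subset[OF well_formed])

lemma sum_snoc_Sigma:
  assumes "finite A" and "\<And>ys. ys \<in> A \<Longrightarrow> finite (S ys)"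
  shows "(\<Sum>xs\<in>(\<lambda>(ys, x). ys @ [x]) ` (SIGMA ys:A. S ys). F xs) = (\<Sum>ys\<in>A. \<Sum>x\<in>S ys. F (ys @ [x]))"
  using assms by (subst sum.reindex) (auto simp: inj_on_def sum.Sigma split_def)

lemma image_snoc_Sigma_eq:
  assumes "\<And>ys x. ys @ [x] \<in> B \<longleftrightarrow> ys \<in> A \<and> x \<in> S ys" and "[] \<notin> B"
  shows "B = (\<lambda>(ys, x). ys @ [x]) ` (SIGMA ys:A. S ys)"
proof (intro equalityI subsetI)
  fix xs assume "xs \<in> B"
  moreover obtain ys x where "xs = ys @ [x]"
    using \<open>xs \<in> B\<close> assms(2) by (metis rev_exhaust)
  ultimately show "xs \<in> (\<lambda>(ys, x). ys @ [x]) ` (SIGMA ys:A. S ys)"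
    using assms(1) by force
qed (use assms(1) in auto)

lemma sum_alive_paths_Suc:
  "(\<Sum>xs\<in>alive_paths v (Suc N). F xs)
     = (\<Sum>ys\<in>alive_paths v N. \<Sum>x\<in>succs (last ys) - Tgt G. F (ys @ [x]))"
proof -
  have "[] \<notin> alive_paths v (Suc N)" by (simp add: alive_paths_def)
  then show ?thesis
    by (subst image_snoc_Sigma_eq[OF snoc_in_alive_paths_Suc_iff])
      (simp_all add: sum_snoc_Sigma finite_alive_paths finite_succs)
qed

lemma sum_plays_of_length_Suc:
  "(\<Sum>xs\<in>plays_of_length v (Suc N). F xs)
     = (\<Sum>ys\<in>alive_paths v N. \<Sum>x\<in>succs (last ys) \<inter> Tgt G. F (ys @ [x]))"
proof -
  have "[] \<notin> plays_of_length v (Suc N)" by (simp add: plays_of_length_def fin_play_def is_path_def)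
  then show ?thesis
    by (subst image_snoc_Sigma_eq[OF snoc_in_plays_of_length_Suc_iff])
      (simp_all add: sum_snoc_Sigma finite_alive_paths finite_succs)
qed

lemma sum_one_step_extensions:
  "(\<Sum>xs\<in>alive_paths v (Suc N). F xs) + (\<Sum>xs\<in>plays_of_length v (Suc N). F xs)
     = (\<Sum>ys\<in>alive_paths v N. \<Sum>x\<in>succs (last ys). F (ys @ [x]))"
proof -
  have "(\<Sum>x\<in>succs (last ys). F (ys @ [x]))
      = (\<Sum>x\<in>succs (last ys) - Tgt G. F (ys @ [x])) + (\<Sum>x\<in>succs (last ys) \<inter> Tgt G. F (ys @ [x]))"
    for ys by (metis add.commute finite_succs sum.Int_Diff)
  then show ?thesis
    unfolding sum_alive_paths_Suc sum_plays_of_length_Suc by (simp add: sum.distrib)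
qed

lemma mass_step:
  "mass (alive_paths v (Suc N)) + mass (plays_of_length v (Suc N)) = mass (alive_paths v N)"
proof -
  have "(\<Sum>x\<in>succs (last ys). walk_prob D (ys @ [x])) = walk_prob D ys"
    if "ys \<in> alive_paths v N" for ys
    using alive_paths_last[OF that] sum_pmf_succs
    by (simp add: walk_prob_snoc flip: sum_distrib_left)
  then show ?thesis unfolding mass_def sum_one_step_extensions by simp
qed

lemma mass_total: "v \<in> Vs G \<Longrightarrow> (\<Sum>k\<le>N. mass (plays_of_length v k)) + mass (alive_paths v N) = 1"
proof (induction N)
  case 0
  then show ?case by (auto simp: plays_of_length_0 alive_paths_0 mass_def)
next
  case (Suc N)
  then show ?case using mass_step[of v N] by simp
qed

lemma sum_lessThan_mass_alive_paths:
  "(\<Sum>k\<le>N. real k * mass (plays_of_length v k)) + real N * mass (alive_paths v N)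
     = (\<Sum>j<N. mass (alive_paths v j))"
proof (induction N)
  case (Suc N)
  have "real N * mass (alive_paths v (Suc N)) + real N * mass (plays_of_length v (Suc N))
      = real N * mass (alive_paths v N)"
    using mass_step[of v N] by (metis distrib_left)
  with Suc mass_step[of v N] show ?case by (simp add: algebra_simps)
qed simp

lemma sum_abs_weighted_plays_le:
  "(\<Sum>xs\<in>plays_of_length v k. \<bar>walk_prob D xs * real_of_int (path_weight G xs)\<bar>)
     \<le> real_of_int (maxW G) * (real k * mass (plays_of_length v k))"
proof -
  have "\<bar>walk_prob D xs * real_of_int (path_weight G xs)\<bar> \<le> real_of_int (maxW G) * real k * walk_prob D xs"
    if "xs \<in> plays_of_length v k" for xs
  proof -
    have "is_path G xs" "length xs = Suc k"
      using that by (auto simp: plays_of_length_def fin_play_def)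
    then have "\<bar>real_of_int (path_weight G xs)\<bar> \<le> real_of_int (maxW G) * real k"
      using abs_path_weight_le[OF well_formed, of xs] by simp
    then have "walk_prob D xs * \<bar>real_of_int (path_weight G xs)\<bar>
        \<le> walk_prob D xs * (real_of_int (maxW G) * real k)"
      by (rule mult_left_mono) (rule walk_prob_nonneg)
    then show ?thesis by (simp add: abs_mult walk_prob_nonneg algebra_simps)
  qed
  then show ?thesis
    unfolding mass_def sum_distrib_left by (simp add: sum_mono mult.assoc)
qed

definition alive_step :: "('v \<Rightarrow> real) \<Rightarrow> 'v \<Rightarrow> real" where
  "alive_step g u = (\<Sum>x\<in>succs u - Tgt G. pmf (D u) x * g x)"

abbreviation survival :: "nat \<Rightarrow> 'v \<Rightarrow> real" where
  "survival N \<equiv> (alive_step ^^ N) (\<lambda>_. 1)"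

lemma sum_alive_paths_last:
  "v \<in> Vs G - Tgt G \<Longrightarrow> (\<Sum>xs\<in>alive_paths v N. walk_prob D xs * g (last xs)) = (alive_step ^^ N) g v"
proof (induction N arbitrary: g)
  case 0
  then show ?case by (simp add: alive_paths_0)
next
  case (Suc N)
  have "(\<Sum>xs\<in>alive_paths v (Suc N). walk_prob D xs * g (last xs))
      = (\<Sum>ys\<in>alive_paths v N. walk_prob D ys * alive_step g (last ys))"
    unfolding sum_alive_paths_Suc alive_step_def
    by (intro sum.cong refl) (auto simp: walk_prob_snoc sum_distrib_left alive_paths_last mult.assoc)
  with Suc show ?case by (simp add: funpow_Suc_right del: funpow.simps)
qed

lemma mass_alive_paths: "v \<in> Vs G - Tgt G \<Longrightarrow> mass (alive_paths v N) = survival N v"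
  unfolding mass_def using sum_alive_paths_last[where g = "\<lambda>_. 1"] by simp

lemma funpow_alive_step_mono:
  assumes "\<And>x. x \<in> Vs G - Tgt G \<Longrightarrow> g x \<le> h x" and "u \<in> Vs G - Tgt G"
  shows "(alive_step ^^ N) g u \<le> (alive_step ^^ N) h u"
  using assms(2)
proof (induction N arbitrary: u)
  case (Suc N)
  then show ?case
    unfolding funpow.simps comp_def alive_step_def using succs_subset
    by (intro sum_mono mult_left_mono) auto
qed (simp add: assms(1))

lemma funpow_alive_step_scale: "(alive_step ^^ N) (\<lambda>x. c * g x) = (\<lambda>u. c * (alive_step ^^ N) g u)"
  by (induction N) (simp_all add: alive_step_def sum_distrib_left algebra_simps)

lemma alive_step_one_le: "u \<in> Vs G - Tgt G \<Longrightarrow> alive_step (\<lambda>_. 1) u \<le> 1"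
  unfolding alive_step_def using sum_pmf_succs[of u]
  by (simp, metis Diff_subset finite_succs pmf_nonneg sum_mono2)

lemma survival_le_1: "u \<in> Vs G - Tgt G \<Longrightarrow> survival N u \<le> 1"
proof (induction N arbitrary: u)
  case (Suc N)
  have "survival (Suc N) u = alive_step (survival N) u"
    by simp
  also have "\<dots> \<le> alive_step (\<lambda>_. 1) u"
    using funpow_alive_step_mono[of "survival N" "\<lambda>_. 1" u 1] Suc by simp
  finally show ?case using alive_step_one_le[OF Suc.prems] by linarith
qed simp

lemma survival_antimono:
  assumes "N \<le> M" and "u \<in> Vs G - Tgt G"
  shows "survival M u \<le> survival N u"
proof -
  obtain k where M: "M = N + k" using assms(1) le_Suc_ex by blast
  have "(alive_step ^^ N) (survival k) u \<le> survival N u"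
    using survival_le_1 by (intro funpow_alive_step_mono assms(2))
  then show ?thesis by (simp add: M funpow_add)
qed

lemma supermartingale_bound:
  fixes \<phi> :: "'v \<Rightarrow> real"
  assumes drift: "\<And>u. u \<in> Vs G - Tgt G \<Longrightarrow>
      (\<Sum>x\<in>succs u. pmf (D u) x * (real_of_int (wt G (u, x)) + \<phi> x)) \<le> \<phi> u"
    and v: "v \<in> Vs G"
  defines "val \<equiv> \<lambda>xs. walk_prob D xs * (real_of_int (path_weight G xs) + \<phi> (last xs))"
  shows "(\<Sum>xs\<in>alive_paths v N. val xs) + (\<Sum>k\<le>N. \<Sum>xs\<in>plays_of_length v k. val xs) \<le> \<phi> v"
proof (induction N)
  case 0
  then show ?case using v by (auto simp: alive_paths_0 plays_of_length_0 val_def)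
next
  case (Suc N)
  have "(\<Sum>x\<in>succs (last ys). val (ys @ [x])) \<le> val ys" if "ys \<in> alive_paths v N" for ys
  proof -
    let ?u = "last ys"
    have u: "?u \<in> Vs G - Tgt G" "ys \<noteq> []" using alive_paths_last[OF that] by auto
    have "(\<Sum>x\<in>succs ?u. val (ys @ [x]))
        = walk_prob D ys * (real_of_int (path_weight G ys) * (\<Sum>x\<in>succs ?u. pmf (D ?u) x)
            + (\<Sum>x\<in>succs ?u. pmf (D ?u) x * (real_of_int (wt G (?u, x)) + \<phi> x)))"
      using u by (simp add: val_def walk_prob_snoc path_weight_snoc sum_distrib_left
          sum_distrib_right sum.distrib algebra_simps)
    also have "\<dots> \<le> walk_prob D ys * (real_of_int (path_weight G ys) + \<phi> ?u)"
      using sum_pmf_succs[OF u(1)] drift[OF u(1)] walk_prob_nonneg by (intro mult_left_mono) auto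
    finally show ?thesis by (simp add: val_def)
  qed
  then have "(\<Sum>xs\<in>alive_paths v (Suc N). val xs) + (\<Sum>xs\<in>plays_of_length v (Suc N). val xs)
      \<le> (\<Sum>xs\<in>alive_paths v N. val xs)"
    unfolding sum_one_step_extensions by (intro sum_mono) auto
  with Suc show ?case by simp
qed

abbreviation plays :: "'v \<Rightarrow> 'v list set" where
  "plays v \<equiv> {xs. fin_play G v xs}"

definition plays_upto :: "'v \<Rightarrow> nat \<Rightarrow> 'v list set" where
  "plays_upto v N = (\<Union>k\<le>N. plays_of_length v k)"

lemma finite_plays_upto: "finite (plays_upto v N)"
  unfolding plays_upto_def using finite_plays_of_length by blast

lemma plays_upto_subset: "plays_upto v N \<subseteq> plays v"
  unfolding plays_upto_def plays_of_length_def by auto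

lemma plays_upto_mono: "N \<le> M \<Longrightarrow> plays_upto v N \<subseteq> plays_upto v M"
  unfolding plays_upto_def by (intro UN_mono) auto

lemma finite_subset_plays_upto:
  assumes "finite X" and "X \<subseteq> plays v"
  shows "\<exists>N. X \<subseteq> plays_upto v N"
proof
  show "X \<subseteq> plays_upto v (Max (insert 0 ((\<lambda>xs. length xs - 1) ` X)))"
  proof
    fix xs assume "xs \<in> X"
    then have "length xs - 1 \<le> Max (insert 0 ((\<lambda>xs. length xs - 1) ` X))"
      using assms(1) by (intro Max_ge) auto
    moreover have "xs \<in> plays_of_length v (length xs - 1)"
      using \<open>xs \<in> X\<close> assms(2) by (auto simp: plays_of_length_def fin_play_def is_path_def)
    ultimately show "xs \<in> plays_upto v (Max (insert 0 ((\<lambda>xs. length xs - 1) ` X)))"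
      unfolding plays_upto_def by blast
  qed
qed

lemma sum_plays_upto: "sum f (plays_upto v N) = (\<Sum>k\<le>N. sum f (plays_of_length v k))"
  unfolding plays_upto_def
  by (rule sum.UNION_disjoint) (auto simp: finite_plays_of_length, auto simp: plays_of_length_def)

lemma tendsto_sum_plays_upto:
  assumes "f summable_on plays v"
  shows "(\<lambda>N. sum f (plays_upto v N)) \<longlonglongrightarrow> infsum f (plays v)"
proof -
  have "filterlim (plays_upto v) (finite_subsets_at_top (plays v)) sequentially"
    unfolding filterlim_finite_subsets_at_top
  proof (intro allI impI)
    fix X assume "finite X \<and> X \<subseteq> plays v"
    then obtain N0 where "X \<subseteq> plays_upto v N0" using finite_subset_plays_upto by blast
    then show "\<forall>\<^sub>F N in sequentially. finite (plays_upto v N) \<and> X \<subseteq> plays_upto v N \<and> plays_upto v N \<subseteq> plays v"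
      using plays_upto_mono finite_plays_upto plays_upto_subset
      by (intro eventually_sequentiallyI[of N0]) blast
  qed
  then show ?thesis using filterlim_compose[OF infsum_tendsto[OF assms]] by blast
qed

lemma summable_on_plays_if_bounded:
  fixes f :: "'v list \<Rightarrow> real"
  assumes "\<And>N. (\<Sum>xs\<in>plays_upto v N. \<bar>f xs\<bar>) \<le> B"
  shows "f summable_on plays v"
proof -
  have "bdd_above ((\<lambda>F. \<Sum>xs\<in>F. norm (f xs)) ` {F. F \<subseteq> plays v \<and> finite F})"
  proof (rule bdd_aboveI2)
    fix F assume "F \<in> {F. F \<subseteq> plays v \<and> finite F}"
    then obtain N where "F \<subseteq> plays_upto v N" using finite_subset_plays_upto by blast
    then have "(\<Sum>xs\<in>F. norm (f xs)) \<le> (\<Sum>xs\<in>plays_upto v N. \<bar>f xs\<bar>)"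
      by (auto intro: sum_mono2[OF finite_plays_upto])
    then show "(\<Sum>xs\<in>F. norm (f xs)) \<le> B" using assms[of N] by linarith
  qed
  then have "(\<lambda>xs. norm (f xs)) summable_on plays v"
    by (rule abs_summable_iff_bdd_above[THEN iffD2])
  then show ?thesis by (rule summable_on_iff_abs_summable_on_real[THEN iffD2])
qed

lemma sum_plays_upto_weight_le:
  assumes v: "v \<in> Vs G"
    and \<phi>_Tgt: "\<And>x. x \<in> Tgt G \<Longrightarrow> \<phi> x = 0"
    and \<phi>_bounded: "\<And>x. x \<in> Vs G - Tgt G \<Longrightarrow> \<bar>\<phi> x\<bar> \<le> B"
    and drift: "\<And>u. u \<in> Vs G - Tgt G \<Longrightarrow>
      (\<Sum>x\<in>succs u. pmf (D u) x * (real_of_int (wt G (u, x)) + \<phi> x)) \<le> \<phi> u"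
  shows "(\<Sum>xs\<in>plays_upto v N. walk_prob D xs * real_of_int (path_weight G xs))
           \<le> \<phi> v + mass (alive_paths v N) * (real_of_int (maxW G) * real N + B)"
proof -
  define val where "val xs = walk_prob D xs * (real_of_int (path_weight G xs) + \<phi> (last xs))" for xs
  have "- (walk_prob D xs * (real_of_int (maxW G) * real N + B)) \<le> val xs"
    if "xs \<in> alive_paths v N" for xs
  proof -
    have "is_path G xs" "length xs = Suc N" using that by (auto simp: alive_paths_def)
    then have "\<bar>real_of_int (path_weight G xs)\<bar> \<le> real_of_int (maxW G) * real N"
      using abs_path_weight_le[OF well_formed, of xs] by simp
    moreover have "\<bar>\<phi> (last xs)\<bar> \<le> B" using \<phi>_bounded alive_paths_last[OF that] by auto
    ultimately have "- (real_of_int (maxW G) * real N + B) \<le> real_of_int (path_weight G xs) + \<phi> (last xs)"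
      by linarith
    then show ?thesis
      unfolding val_def using walk_prob_nonneg[of D xs] by (metis minus_mult_right mult_left_mono)
  qed
  then have "- (mass (alive_paths v N) * (real_of_int (maxW G) * real N + B))
      \<le> (\<Sum>xs\<in>alive_paths v N. val xs)"
    unfolding mass_def sum_distrib_right by (simp add: sum_mono flip: sum_negf)
  moreover have "(\<Sum>xs\<in>plays_upto v N. walk_prob D xs * real_of_int (path_weight G xs))
      = (\<Sum>k\<le>N. \<Sum>xs\<in>plays_of_length v k. val xs)"
    unfolding sum_plays_upto val_def using \<phi>_Tgt by (simp add: plays_of_length_def fin_play_def)
  ultimately show ?thesis
    using supermartingale_bound[OF drift v, of N] unfolding val_def by linarith
qed

end

locale terminating_chain = edge_chain +
  assumes eventually_absorbed: "\<And>u. u \<in> Vs G - Tgt G \<Longrightarrow> \<exists>k. survival k u < 1"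
begin

lemma survival_uniformly_lt_1:
  obtains m c where "0 < m" "0 < c" "c < 1" "\<And>u. u \<in> Vs G - Tgt G \<Longrightarrow> survival m u \<le> c"
proof -
  define S where "S = Vs G - Tgt G"
  have "finite S" using finite_Vs by (simp add: S_def)
  obtain k where k: "\<And>u. u \<in> S \<Longrightarrow> survival (k u) u < 1"
    using eventually_absorbed unfolding S_def by metis
  define m where "m = Suc (Max (k ` S))"
  have lt: "survival m u < 1" if "u \<in> S" for u
  proof -
    have "k u \<le> m" unfolding m_def using \<open>finite S\<close> that by (simp add: le_SucI)
    then show ?thesis using survival_antimono[of "k u" m u] k[OF that] that by (simp add: S_def)
  qed
  define c where "c = Max (insert (1/2) (survival m ` S))"
  have "c < 1" using \<open>finite S\<close> lt by (simp add: c_def)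
  moreover have "0 < c" using \<open>finite S\<close> by (simp add: c_def Max_gr_iff)
  moreover have "survival m u \<le> c" if "u \<in> S" for u
    unfolding c_def using \<open>finite S\<close> that by (intro Max_ge) auto
  ultimately show ?thesis using that[of m c] by (simp add: S_def m_def)
qed

lemma mass_alive_paths_geometric:
  obtains C r where "0 \<le> C" "0 \<le> r" "r < 1" "\<And>v N. mass (alive_paths v N) \<le> C * r ^ N"
proof -
  obtain m c where mc: "0 < m" "0 < c" "c < 1" "\<And>u. u \<in> Vs G - Tgt G \<Longrightarrow> survival m u \<le> c"
    using survival_uniformly_lt_1 by blast
  have power: "survival (a * m) u \<le> c ^ a" if "u \<in> Vs G - Tgt G" for a u
    using that
  proof (induction a arbitrary: u)
    case (Suc a)
    have "survival (Suc a * m) u = (alive_step ^^ (a * m)) (survival m) u"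
      by (simp add: funpow_add add.commute[of m])
    also have "\<dots> \<le> (alive_step ^^ (a * m)) (\<lambda>_. c * 1) u"
      using Suc.prems mc(4) by (intro funpow_alive_step_mono) auto
    also have "\<dots> = c * survival (a * m) u"
      by (simp only: funpow_alive_step_scale)
    also have "\<dots> \<le> c * c ^ a" using Suc mc by (intro mult_left_mono) auto
    finally show ?case by simp
  qed simp
  define r where "r = root m c"
  have r: "0 < r" "r < 1" "r ^ m = c" using mc by (auto simp: r_def real_root_gt_zero)
  have "mass (alive_paths v N) \<le> (1 / c) * r ^ N" for v N
  proof (cases "v \<in> Vs G - Tgt G")
    case False
    then show ?thesis using alive_paths_empty r mc by (simp add: mass_def)
  next
    case True
    have "mass (alive_paths v N) \<le> survival (N div m * m) v"
      using True by (simp add: mass_alive_paths survival_antimono)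
    also have "\<dots> \<le> r ^ (m * (N div m))"
      using power True r by (simp add: power_mult)
    also have "\<dots> \<le> (1 / c) * r ^ N"
    proof -
      have "N \<le> m * (N div m) + m"
        using mc(1) by (metis add_le_mono div_mult_mod_eq less_imp_le_nat mod_less_divisor mult.commute order.refl)
      then have "r ^ (m * (N div m) + m) \<le> r ^ N" using r by (intro power_decreasing) auto
      then show ?thesis using mc r by (simp add: power_add field_simps)
    qed
    finally show ?thesis .
  qed
  then show ?thesis using that[of "1 / c" r] mc r by simp
qed

lemma mass_alive_paths_tendsto_0:
  "(\<lambda>N. mass (alive_paths v N)) \<longlonglongrightarrow> 0"
  "(\<lambda>N. real N * mass (alive_paths v N)) \<longlonglongrightarrow> 0"
proof -
  obtain C r where Cr: "0 \<le> C" "0 \<le> r" "r < 1" "\<And>N. mass (alive_paths v N) \<le> C * r ^ N"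
    using mass_alive_paths_geometric by metis
  show "(\<lambda>N. mass (alive_paths v N)) \<longlonglongrightarrow> 0"
  proof (rule real_tendsto_sandwich[of "\<lambda>_. 0" _ _ "\<lambda>N. C * r ^ N"])
    show "(\<lambda>N. C * r ^ N) \<longlonglongrightarrow> 0"
      using Cr by (intro tendsto_mult_right_zero LIMSEQ_power_zero) auto
  qed (auto simp: mass_nonneg Cr(4))
  show "(\<lambda>N. real N * mass (alive_paths v N)) \<longlonglongrightarrow> 0"
  proof (rule real_tendsto_sandwich[of "\<lambda>_. 0" _ _ "\<lambda>N. C * (real N * r ^ N)"])
    show "(\<lambda>N. C * (real N * r ^ N)) \<longlonglongrightarrow> 0"
      using Cr by (intro tendsto_mult_right_zero powser_times_n_limit_0) auto
    have "real N * mass (alive_paths v N) \<le> C * (real N * r ^ N)" for N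
      using mult_left_mono[OF Cr(4)[of N], of "real N"] by (simp add: algebra_simps)
    then show "\<forall>\<^sub>F N in sequentially. real N * mass (alive_paths v N) \<le> C * (real N * r ^ N)"
      by simp
  qed (auto simp: mass_nonneg)
qed

lemma summable_walk_prob_plays:
  assumes "v \<in> Vs G"
  shows "walk_prob D summable_on plays v"
proof (rule summable_on_plays_if_bounded)
  fix N
  have "(\<Sum>xs\<in>plays_upto v N. \<bar>walk_prob D xs\<bar>) = (\<Sum>k\<le>N. mass (plays_of_length v k))"
    by (simp add: walk_prob_nonneg sum_plays_upto mass_def)
  also have "\<dots> \<le> 1"
    using mass_total[OF assms, of N] mass_nonneg[of "alive_paths v N"] by linarith
  finally show "(\<Sum>xs\<in>plays_upto v N. \<bar>walk_prob D xs\<bar>) \<le> 1" .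
qed

lemma summable_weighted_plays:
  "(\<lambda>xs. walk_prob D xs * real_of_int (path_weight G xs)) summable_on plays v"
proof -
  obtain C r where Cr: "0 \<le> C" "0 \<le> r" "r < 1" "\<And>N. mass (alive_paths v N) \<le> C * r ^ N"
    using mass_alive_paths_geometric by metis
  define W where "W = real_of_int (maxW G)"
  have W: "0 \<le> W" using maxW_nonneg[OF well_formed] by (simp add: W_def)
  show ?thesis
  proof (rule summable_on_plays_if_bounded)
    fix N
    have "(\<Sum>xs\<in>plays_upto v N. \<bar>walk_prob D xs * real_of_int (path_weight G xs)\<bar>)
        \<le> W * (\<Sum>k\<le>N. real k * mass (plays_of_length v k))"
      unfolding sum_plays_upto sum_distrib_left W_def by (intro sum_mono sum_abs_weighted_plays_le)
    also have "\<dots> \<le> W * (\<Sum>j<N. mass (alive_paths v j))"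
    proof -
      have "0 \<le> real N * mass (alive_paths v N)" by (simp add: mass_nonneg)
      then show ?thesis using sum_lessThan_mass_alive_paths[of v N] W by (intro mult_left_mono) linarith+
    qed
    also have "\<dots> \<le> W * (\<Sum>j<N. C * r ^ j)"
      using Cr W by (intro mult_left_mono sum_mono) auto
    also have "\<dots> \<le> W * (C / (1 - r))"
    proof -
      have "(\<Sum>j<N. r ^ j) \<le> 1 / (1 - r)"
        using Cr by (simp add: sum_gp_strict divide_right_mono)
      then show ?thesis
        using Cr W by (simp add: mult_left_mono divide_inverse flip: sum_distrib_left)
    qed
    finally show "(\<Sum>xs\<in>plays_upto v N. \<bar>walk_prob D xs * real_of_int (path_weight G xs)\<bar>)
        \<le> W * (C / (1 - r))" .
  qed
qed

lemma infsum_walk_prob_plays: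
  assumes "v \<in> Vs G"
  shows "infsum (walk_prob D) (plays v) = 1"
proof -
  have "(\<lambda>N. sum (walk_prob D) (plays_upto v N)) = (\<lambda>N. 1 - mass (alive_paths v N))"
    using mass_total[OF assms] by (auto simp: sum_plays_upto mass_def algebra_simps)
  moreover have "(\<lambda>N. 1 - mass (alive_paths v N)) \<longlonglongrightarrow> 1 - 0"
    by (intro tendsto_diff tendsto_const mass_alive_paths_tendsto_0)
  ultimately show ?thesis
    using tendsto_sum_plays_upto[OF summable_walk_prob_plays[OF assms]] LIMSEQ_unique by fastforce
qed

theorem expected_weight_le_potential:
  assumes v: "v \<in> Vs G"
    and \<phi>_Tgt: "\<And>x. x \<in> Tgt G \<Longrightarrow> \<phi> x = 0"
    and \<phi>_bounded: "\<And>x. x \<in> Vs G - Tgt G \<Longrightarrow> \<bar>\<phi> x\<bar> \<le> B"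
    and drift: "\<And>u. u \<in> Vs G - Tgt G \<Longrightarrow>
      (\<Sum>x\<in>succs u. pmf (D u) x * (real_of_int (wt G (u, x)) + \<phi> x)) \<le> \<phi> u"
  shows "infsum (\<lambda>xs. walk_prob D xs * real_of_int (path_weight G xs)) (plays v) \<le> \<phi> v"
proof -
  define W where "W = real_of_int (maxW G)"
  have "(\<lambda>N. \<phi> v + (W * (real N * mass (alive_paths v N)) + B * mass (alive_paths v N)))
      \<longlonglongrightarrow> \<phi> v + (W * 0 + B * 0)"
    by (intro tendsto_add tendsto_const tendsto_mult mass_alive_paths_tendsto_0)
  moreover have "(\<Sum>xs\<in>plays_upto v N. walk_prob D xs * real_of_int (path_weight G xs))
      \<le> \<phi> v + (W * (real N * mass (alive_paths v N)) + B * mass (alive_paths v N))" for N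
    using sum_plays_upto_weight_le[OF v \<phi>_Tgt \<phi>_bounded drift, of N]
    by (simp add: W_def algebra_simps)
  ultimately show ?thesis
    using LIMSEQ_le tendsto_sum_plays_upto[OF summable_weighted_plays] by fastforce
qed

end

section \<open>Almost-sure termination under \<open>\<rho>\<^sub>p\<close>\<close>

context edge_chain
begin

lemma never_absorbed_successor:
  assumes u: "u \<in> Vs G - Tgt G" and stuck: "\<forall>k. \<not> survival k u < 1" and x: "x \<in> set_pmf (D u)"
  shows "x \<in> Vs G - Tgt G \<and> (\<forall>k. \<not> survival k x < 1)"
proof -
  have x_succ: "x \<in> succs u" using D_supported[OF u] x by (auto simp: succs_def)
  have key: "1 \<le> (if x \<in> Tgt G then 0 else survival k x)" for k
  proof -
    define h where "h y = (if y \<in> Tgt G then 0 else survival k y)" for y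
    have h_le: "h y \<le> 1" if "y \<in> succs u" for y
      using that succs_subset survival_le_1 by (auto simp: h_def)
    have "pmf (D u) x * (1 - h x) \<le> (\<Sum>y\<in>succs u. pmf (D u) y * (1 - h y))"
      using x_succ h_le by (intro member_le_sum finite_succs) auto
    also have "\<dots> = 1 - alive_step (survival k) u"
    proof -
      have "(\<Sum>y\<in>succs u. pmf (D u) y * h y) = alive_step (survival k) u"
        unfolding alive_step_def h_def by (rule sum.mono_neutral_cong_right[OF finite_succs]) auto
      then show ?thesis using sum_pmf_succs[OF u] by (simp add: right_diff_distrib sum_subtractf)
    qed
    also have "\<dots> \<le> 0" using stuck[rule_format, of "Suc k"] by simp
    finally have "1 \<le> h x" using x by (auto simp: mult_le_0_iff set_pmf_eq)
    then show ?thesis by (simp add: h_def)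
  qed
  have "x \<notin> Tgt G" using key[of 0] by auto
  moreover have "\<not> survival k x < 1" for k using key[of k] \<open>x \<notin> Tgt G\<close> by simp
  ultimately show ?thesis using x_succ succs_subset by blast
qed

end

lemma walk_in_rtrancl:
  assumes "\<And>i. (f i, f (Suc i)) \<in> E" and "i \<le> j"
  shows "(f i, f j) \<in> E\<^sup>*"
  using assms(2) by (induction j) (auto simp: le_Suc_eq intro: rtrancl_into_rtrancl assms(1))

lemma scc_has_neg_cycle_cong: "u \<in> scc G v \<Longrightarrow> scc_has_neg_cycle G u \<longleftrightarrow> scc_has_neg_cycle G v"
proof -
  assume "u \<in> scc G v"
  then have "scc G u = scc G v" unfolding scc_def by (auto intro: rtrancl_trans)
  then show ?thesis by (simp add: scc_has_neg_cycle_def)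
qed

locale switching_walk =
  fixes G :: "'v spgame" and \<sigma>1 \<sigma>2 :: "'v \<Rightarrow> 'v" and f :: "nat \<Rightarrow> 'v"
  assumes well_formed: "well_formed G"
    and NC: "NC_strategy G \<sigma>1" and attractor: "attractor_strategy G \<sigma>2"
    and edges: "\<And>i. (f i, f (Suc i)) \<in> Edg G"
    and Min_moves: "\<And>i. f i \<in> VMin G \<Longrightarrow>
      f (Suc i) = (if scc_has_neg_cycle G (f i) then \<sigma>2 (f i) else \<sigma>1 (f i))"
begin

lemma in_Vs_minus_Tgt: "f i \<in> Vs G - Tgt G"
  using Edg_subset[OF well_formed edges[of i]] by blast

lemma revisit_in_neg_cycle_scc:
  assumes "i < j" and "f i = f j"
  shows "scc_has_neg_cycle G (f i)"
proof (rule ccontr)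
  assume no_neg: "\<not> scc_has_neg_cycle G (f i)"
  define xs where "xs = map f [i..<Suc j]"
  have nth_xs: "a < Suc j - i \<Longrightarrow> xs ! a = f (i + a)" for a
    by (simp add: xs_def del: upt_Suc)
  have len_xs: "length xs = Suc j - i" by (simp add: xs_def del: upt_Suc)
  have in_scc: "i \<le> k \<Longrightarrow> k \<le> j \<Longrightarrow> f k \<in> scc G (f i)" for k
    using walk_in_rtrancl[where f = f, OF edges, of i k] walk_in_rtrancl[where f = f, OF edges, of k j]
      assms(2)
    unfolding scc_def by auto
  have "is_cycle G xs"
    unfolding is_cycle_def is_path_def
  proof (intro conjI allI impI)
    show "(xs ! a, xs ! Suc a) \<in> Edg G" if "Suc a < length xs" for a
      using that edges[of "i + a"] by (simp add: len_xs nth_xs)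
    show "hd xs = last xs" using assms by (simp add: xs_def hd_map last_map)
  qed (use assms in_Vs_minus_Tgt in \<open>auto simp: xs_def\<close>)
  moreover have "conforms G \<sigma>1 xs"
    unfolding conforms_def
  proof (intro allI impI)
    fix a assume a: "Suc a < length xs" "xs ! a \<in> VMin G"
    then have "f (i + a) \<in> scc G (f i)" using in_scc[of "i + a"] len_xs by simp
    then have "\<not> scc_has_neg_cycle G (f (i + a))" using no_neg by (simp add: scc_has_neg_cycle_cong)
    then show "xs ! Suc a = \<sigma>1 (xs ! a)" using Min_moves[of "i + a"] a by (simp add: len_xs nth_xs)
  qed
  ultimately have "path_weight G xs < 0" using NC unfolding NC_strategy_def by blast
  moreover have "set xs \<subseteq> scc G (f i)" using in_scc by (auto simp: xs_def)
  ultimately show False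
    using \<open>is_cycle G xs\<close> no_neg unfolding scc_has_neg_cycle_def by blast
qed

lemma finite_visits_without_neg_cycle: "finite {k. \<not> scc_has_neg_cycle G (f k)}"
proof -
  let ?A = "{k. \<not> scc_has_neg_cycle G (f k)}"
  have "inj_on f ?A"
  proof (rule inj_onI)
    fix i j assume "i \<in> ?A" "j \<in> ?A" "f i = f j"
    then show "i = j"
      using revisit_in_neg_cycle_scc[of i j] revisit_in_neg_cycle_scc[of j i]
      by (cases i j rule: linorder_cases) auto
  qed
  moreover have "f ` ?A \<subseteq> Vs G" using in_Vs_minus_Tgt by auto
  ultimately show ?thesis
    using well_formed finite_subset finite_imageD unfolding well_formed_def by metis
qed

lemma impossible: False
proof -
  obtain K where "\<forall>k\<in>{k. \<not> scc_has_neg_cycle G (f k)}. k < K"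
    using finite_visits_without_neg_cycle finite_nat_set_iff_bounded by blast
  then have K: "scc_has_neg_cycle G (f (K + i))" for i by force
  define g where "g i = f (K + i)" for i
  have "\<exists>i. g i \<in> Tgt G"
    using attractor unfolding attractor_strategy_def
  proof (elim conjE allE impE)
    show "g 0 \<in> Vs G" using in_Vs_minus_Tgt by (simp add: g_def)
    show "\<forall>i. (g i, g (Suc i)) \<in> Edg G" using edges by (simp add: g_def)
    show "\<forall>i. g i \<in> VMin G \<longrightarrow> g (Suc i) = \<sigma>2 (g i)" using Min_moves K by (simp add: g_def)
  qed
  then show False using in_Vs_minus_Tgt by (auto simp: g_def)
qed

end

lemma set_pmf_rho_p_subset: "set_pmf (rho_p G s1 s2 p u) \<subseteq> {s1 u, s2 u}"
  unfolding rho_p_def by auto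

lemma pmf_rho_p_ge:
  assumes "0 \<le> p" "p \<le> 1"
  shows "p \<le> pmf (rho_p G s1 s2 p u) (s1 u)"
proof -
  have "pmf (map_pmf (\<lambda>b. if b then s1 u else s2 u) (bernoulli_pmf p)) (s1 u) = p"
    if "s1 u \<noteq> s2 u"
  proof -
    have "(\<lambda>b. if b then s1 u else s2 u) -` {s1 u} = {True}"
      using that by (auto split: if_splits)
    then show ?thesis using assms by (simp add: pmf_map measure_pmf_single)
  qed
  then show ?thesis unfolding rho_p_def using assms by auto
qed

lemma edge_chain_induced_kernel:
  assumes "well_formed G" "md_strat_Min G s1" "md_strat_Min G s2" "ml_strat_Max G \<tau>"
  shows "edge_chain G (induced_kernel G (rho_p G s1 s2 p) \<tau>)"
proof
  fix u assume "u \<in> Vs G - Tgt G"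
  then show "set_pmf (induced_kernel G (rho_p G s1 s2 p) \<tau> u) \<subseteq> {x. (u, x) \<in> Edg G}"
    using assms(2-4) set_pmf_rho_p_subset[of G s1 s2 p u]
    by (auto simp: induced_kernel_def md_strat_Min_def ml_strat_Max_def Vs_def)
qed (rule assms(1))

lemma terminating_chain_induced_kernel:
  assumes wf: "well_formed G" and NC: "NC_strategy G s1" and attr: "attractor_strategy G s2"
    and p: "0 < p" "p < 1" and \<tau>: "ml_strat_Max G \<tau>"
  shows "terminating_chain G (induced_kernel G (rho_p G s1 s2 p) \<tau>)"
proof -
  define D where "D = induced_kernel G (rho_p G s1 s2 p) \<tau>"
  interpret edge_chain G D
    unfolding D_def using assms
    by (intro edge_chain_induced_kernel) (auto simp: NC_strategy_def attractor_strategy_def)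
  \<comment> \<open>Since \<open>0 < p < 1\<close>, both \<open>s1 u\<close> and \<open>s2 u\<close> lie in the support, so the
    support contains a walk that switches exactly as in \<open>switching_walk\<close>.\<close>
  define nx where "nx u = (if u \<in> VMin G then if scc_has_neg_cycle G u then s2 u else s1 u
                           else (SOME x. x \<in> set_pmf (\<tau> u)))" for u
  have nx_D: "nx u \<in> set_pmf (D u)" for u
    using p set_pmf_not_empty[of "\<tau> u"]
    by (auto simp: nx_def D_def induced_kernel_def rho_p_def some_in_eq)
  have "\<exists>k. survival k u < 1" if u: "u \<in> Vs G - Tgt G" for u
  proof (rule ccontr)
    assume "\<nexists>k. survival k u < 1"
    then have stuck: "(nx ^^ i) u \<in> Vs G - Tgt G \<and> (\<forall>k. \<not> survival k ((nx ^^ i) u) < 1)" for i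
    proof (induction i)
      case (Suc i)
      then show ?case using never_absorbed_successor[OF _ _ nx_D] by simp
    qed (use u in simp)
    have "switching_walk G s1 s2 (\<lambda>i. (nx ^^ i) u)"
    proof
      show "((nx ^^ i) u, (nx ^^ Suc i) u) \<in> Edg G" for i
        using D_supported nx_D stuck[of i] by auto
    qed (auto simp: wf NC attr nx_def)
    then show False by (rule switching_walk.impossible)
  qed
  then show ?thesis
    unfolding D_def[symmetric] by unfold_locales
qed

section \<open>The potential of an NC-strategy\<close>

definition conforming_prefixes :: "'v spgame \<Rightarrow> ('v \<Rightarrow> 'v) \<Rightarrow> 'v \<Rightarrow> 'v list set" where
  "conforming_prefixes G s v =
     {xs. is_path G xs \<and> hd xs = v \<and> conforms G s xs \<and> set (butlast xs) \<inter> Tgt G = {}}"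

definition prefix_value :: "'v spgame \<Rightarrow> real \<Rightarrow> real \<Rightarrow> 'v list \<Rightarrow> real" where
  "prefix_value G \<beta> M xs =
     real_of_int (path_weight G xs) + \<beta> * (real (length xs) - 1) - (if last xs \<in> Tgt G then 0 else M)"

definition potential :: "'v spgame \<Rightarrow> ('v \<Rightarrow> 'v) \<Rightarrow> real \<Rightarrow> real \<Rightarrow> 'v \<Rightarrow> real" where
  "potential G s \<beta> M v = Sup (prefix_value G \<beta> M ` conforming_prefixes G s v)"

lemma conforming_prefixes_iff:
  "xs \<in> conforming_prefixes G s v \<longleftrightarrow>
     xs \<noteq> [] \<and> set xs \<subseteq> Vs G \<and> successively (\<lambda>a b. (a, b) \<in> Edg G) xs \<and> hd xs = v
     \<and> successively (\<lambda>a b. a \<in> VMin G \<longrightarrow> b = s a) xs \<and> set (butlast xs) \<inter> Tgt G = {}"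
  unfolding conforming_prefixes_def is_path_iff_successively conforms_iff_successively by auto

lemma conforming_prefix_remove_cycle:
  assumes NC: "NC_strategy G s" and fin: "finite (Vs G)"
    and xs: "xs \<in> conforming_prefixes G s v" and long: "card (Vs G) < length xs"
    and \<beta>: "0 \<le> \<beta>" "\<beta> * real (card (Vs G)) \<le> 1"
  obtains ys where "ys \<in> conforming_prefixes G s v" "length ys < length xs"
    "prefix_value G \<beta> M xs \<le> prefix_value G \<beta> M ys"
proof -
  have "set xs \<subseteq> Vs G" using xs by (simp add: conforming_prefixes_def is_path_def)
  then obtain a y b e where xs_eq: "xs = a @ y # b @ y # e" and len_b: "length b < card (Vs G)"
    using list_repeats_within_card[OF fin _ long] by blast
  define ys where "ys = a @ y # e"
  define cyc where "cyc = y # b @ [y]"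
  have succ: "successively P ys \<and> successively P cyc" if "successively P xs" for P
    using successively_remove_cycle[of P a y b e] that by (simp add: xs_eq ys_def cyc_def)
  have sets: "set ys \<subseteq> set xs" "set cyc \<subseteq> set xs" "set (butlast ys) \<subseteq> set (butlast xs)"
    by (auto simp: xs_eq ys_def cyc_def butlast_append)
  have ends: "hd ys = hd xs" "last ys = last xs"
    by (cases a; simp add: xs_eq ys_def) (cases e; simp add: xs_eq ys_def)
  have ys: "ys \<in> conforming_prefixes G s v"
    using xs succ sets ends unfolding conforming_prefixes_iff by (auto simp: ys_def)
  have "is_cycle G cyc" "conforms G s cyc"
    using xs succ sets unfolding conforming_prefixes_iff is_cycle_def is_path_iff_successively
      conforms_iff_successively by (auto simp: cyc_def)
  then have "path_weight G cyc \<le> -1" using NC unfolding NC_strategy_def by fastforce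
  moreover have "path_weight G xs = path_weight G ys + path_weight G cyc"
    unfolding xs_eq ys_def cyc_def
    using path_weight_append_Cons[of G a y "b @ y # e"] path_weight_append_Cons[of G "y # b" y e]
      path_weight_append_Cons[of G a y e] by simp
  moreover have "\<beta> * real (length b + 1) \<le> 1"
    using len_b \<beta> mult_left_mono[of "real (length b + 1)" "real (card (Vs G))" \<beta>] by simp
  moreover have "length xs = length ys + (length b + 1)" by (simp add: xs_eq ys_def)
  ultimately have "prefix_value G \<beta> M xs \<le> prefix_value G \<beta> M ys"
    using ends(2) unfolding prefix_value_def by (simp add: algebra_simps)
  then show ?thesis using that ys by (simp add: xs_eq ys_def)
qed

lemma mixture_le_if_trade_off:
  fixes p q M \<phi> B \<beta> :: real
  assumes "p \<le> q" "q \<le> 1" "- M \<le> \<phi>" "0 \<le> B + M" "0 < \<beta>"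
    and trade_off: "(1 - p) * (B + M) \<le> p * \<beta>"
  shows "q * (\<phi> - \<beta>) + (1 - q) * B \<le> \<phi>"
proof -
  have "(1 - q) * (B - \<phi>) \<le> (1 - q) * (B + M)"
    using assms(2,3) by (intro mult_left_mono) auto
  also have "\<dots> \<le> (1 - p) * (B + M)"
    using assms(1,4) by (intro mult_right_mono) auto
  also have "\<dots> \<le> q * \<beta>"
    using trade_off mult_right_mono[OF assms(1), of \<beta>] assms(5) by linarith
  finally show ?thesis by (simp add: algebra_simps)
qed

locale nc_potential =
  fixes G :: "'v spgame" and s :: "'v \<Rightarrow> 'v" and \<beta> M :: real
  assumes well_formed: "well_formed G" and NC: "NC_strategy G s"
    and \<beta>_pos: "0 < \<beta>" and \<beta>_small: "\<beta> * real (card (Vs G)) \<le> 1" and M_nonneg: "0 \<le> M"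
begin

abbreviation W :: real where
  "W \<equiv> real_of_int (maxW G)"

abbreviation \<phi> :: "'v \<Rightarrow> real" where
  "\<phi> \<equiv> potential G s \<beta> M"

lemma short_conforming_prefix:
  assumes "xs \<in> conforming_prefixes G s v"
  shows "\<exists>ys\<in>conforming_prefixes G s v.
           length ys \<le> card (Vs G) \<and> prefix_value G \<beta> M xs \<le> prefix_value G \<beta> M ys"
  using assms
proof (induction "length xs" arbitrary: xs rule: less_induct)
  case less
  show ?case
  proof (cases "length xs \<le> card (Vs G)")
    case False
    then obtain ys where "ys \<in> conforming_prefixes G s v" "length ys < length xs"
        "prefix_value G \<beta> M xs \<le> prefix_value G \<beta> M ys"
      using conforming_prefix_remove_cycle[OF NC _ less.prems _ less_imp_le[OF \<beta>_pos] \<beta>_small]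
        well_formed unfolding well_formed_def by (metis not_le)
    then show ?thesis using less.hyps[of ys] by (meson order.trans)
  qed (use less.prems in blast)
qed

lemma prefix_value_le_if_short:
  assumes "ys \<in> conforming_prefixes G s v" and "length ys \<le> card (Vs G)"
  shows "prefix_value G \<beta> M ys \<le> (W + \<beta>) * real (card (Vs G)) - (if last ys \<in> Tgt G then 0 else M)"
proof -
  have "real_of_int (path_weight G ys) \<le> W * (real (length ys) - 1)"
    using abs_path_weight_le[OF well_formed] assms(1) by (force simp: conforming_prefixes_def)
  also have "\<dots> \<le> W * real (card (Vs G))"
    using assms(2) maxW_nonneg[OF well_formed] by (intro mult_left_mono) auto
  finally show ?thesis
    using assms(2) \<beta>_pos mult_left_mono[of "real (length ys) - 1" "real (card (Vs G))" \<beta>]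
    unfolding prefix_value_def by (simp add: algebra_simps)
qed

lemma prefix_value_le:
  assumes "xs \<in> conforming_prefixes G s v"
  shows "prefix_value G \<beta> M xs \<le> (W + \<beta>) * real (card (Vs G))"
proof -
  obtain ys where "ys \<in> conforming_prefixes G s v" "length ys \<le> card (Vs G)"
    "prefix_value G \<beta> M xs \<le> prefix_value G \<beta> M ys"
    using short_conforming_prefix[OF assms] by blast
  moreover have "0 \<le> (if last ys \<in> Tgt G then 0 else M)" using M_nonneg by simp
  ultimately show ?thesis using prefix_value_le_if_short by fastforce
qed

lemma bdd_above_prefix_values: "bdd_above (prefix_value G \<beta> M ` conforming_prefixes G s v)"
  using prefix_value_le by (intro bdd_aboveI2) blast

lemma singleton_conforming_prefix: "v \<in> Vs G \<Longrightarrow> [v] \<in> conforming_prefixes G s v"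
  unfolding conforming_prefixes_def is_path_def conforms_def by auto

lemma potential_Tgt: "v \<in> Tgt G \<Longrightarrow> \<phi> v = 0"
proof -
  assume v: "v \<in> Tgt G"
  have "conforming_prefixes G s v = {[v]}"
  proof (intro equalityI subsetI)
    fix xs assume "xs \<in> conforming_prefixes G s v"
    then have "xs \<noteq> []" "hd xs = v" "set (butlast xs) \<inter> Tgt G = {}"
      by (auto simp: conforming_prefixes_def is_path_def)
    with v show "xs \<in> {[v]}" by (cases xs) (auto split: if_splits)
  qed (use v singleton_conforming_prefix in \<open>auto simp: Vs_def\<close>)
  with v show ?thesis by (simp add: potential_def prefix_value_def)
qed

lemma potential_ge: "v \<in> Vs G - Tgt G \<Longrightarrow> - M \<le> \<phi> v"
proof -
  assume v: "v \<in> Vs G - Tgt G"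
  then have "prefix_value G \<beta> M [v] \<le> \<phi> v"
    unfolding potential_def using singleton_conforming_prefix bdd_above_prefix_values
    by (intro cSup_upper) auto
  with v show ?thesis by (simp add: prefix_value_def)
qed

lemma potential_le: "v \<in> Vs G \<Longrightarrow> \<phi> v \<le> (W + \<beta>) * real (card (Vs G))"
  unfolding potential_def using singleton_conforming_prefix prefix_value_le by (intro cSup_least) auto

lemma potential_decreases_along_edge:
  assumes u: "u \<in> Vs G - Tgt G" and e: "(u, x) \<in> Edg G" and s: "u \<in> VMin G \<Longrightarrow> x = s u"
  shows "real_of_int (wt G (u, x)) + \<beta> + \<phi> x \<le> \<phi> u"
proof -
  have x: "x \<in> Vs G" using Edg_subset[OF well_formed e] by blast
  have "prefix_value G \<beta> M ys \<le> \<phi> u - real_of_int (wt G (u, x)) - \<beta>"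
    if ys: "ys \<in> conforming_prefixes G s x" for ys
  proof -
    have "ys \<noteq> []" "hd ys = x" using ys by (auto simp: conforming_prefixes_def is_path_def)
    then have "u # ys \<in> conforming_prefixes G s u"
      using ys u e s by (auto simp: conforming_prefixes_iff successively_Cons)
    then have "prefix_value G \<beta> M (u # ys) \<le> \<phi> u"
      unfolding potential_def using bdd_above_prefix_values by (intro cSup_upper) auto
    moreover have "path_weight G (u # ys) = wt G (u, x) + path_weight G ys"
      using \<open>ys \<noteq> []\<close> \<open>hd ys = x\<close> by (cases ys) auto
    ultimately show ?thesis
      using \<open>ys \<noteq> []\<close> unfolding prefix_value_def by (simp add: algebra_simps)
  qed
  then have "\<phi> x \<le> \<phi> u - real_of_int (wt G (u, x)) - \<beta>"
    unfolding potential_def using singleton_conforming_prefix[OF x] by (intro cSup_least) auto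
  then show ?thesis by simp
qed

lemma potential_le_Val_d:
  assumes v: "v \<in> Vs G" and fake: "fake_optimal G s" and R: "Val_d G v \<le> ereal R"
    and M_large: "(W + \<beta>) * real (card (Vs G)) - M \<le> R"
  shows "\<phi> v \<le> R + \<beta> * real (card (Vs G))"
  unfolding potential_def
proof (rule cSup_least)
  show "prefix_value G \<beta> M ` conforming_prefixes G s v \<noteq> {}"
    using singleton_conforming_prefix[OF v] by blast
next
  fix z assume "z \<in> prefix_value G \<beta> M ` conforming_prefixes G s v"
  then obtain xs where xs: "xs \<in> conforming_prefixes G s v" and z: "z = prefix_value G \<beta> M xs"
    by blast
  obtain ys where ys: "ys \<in> conforming_prefixes G s v" "length ys \<le> card (Vs G)"
    and z_le: "z \<le> prefix_value G \<beta> M ys"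
    using short_conforming_prefix[OF xs] z by blast
  show "z \<le> R + \<beta> * real (card (Vs G))"
  proof (cases "last ys \<in> Tgt G")
    case True
    then have "fin_play G v ys" "conforms G s ys"
      using ys(1) by (auto simp: conforming_prefixes_def fin_play_iff)
    then have "ereal (real_of_int (path_weight G ys))
        \<le> Sup {ereal (real_of_int (path_weight G xs)) | xs. fin_play G v xs \<and> conforms G s xs}"
      by (intro Sup_upper) blast
    also have "\<dots> \<le> ereal R" using fake v R unfolding fake_optimal_def by (blast intro: order_trans)
    finally have "real_of_int (path_weight G ys) \<le> R" by simp
    moreover have "\<beta> * (real (length ys) - 1) \<le> \<beta> * real (card (Vs G))"
      using ys(2) \<beta>_pos by (intro mult_left_mono) auto
    ultimately show ?thesis using True z_le unfolding prefix_value_def by simp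
  next
    case False
    have "0 \<le> \<beta> * real (card (Vs G))" using \<beta>_pos by simp
    then show ?thesis using prefix_value_le_if_short[OF ys] False M_large z_le by simp
  qed
qed

end

context nc_potential
begin

lemma expected_step_Max:
  assumes u: "u \<in> Vs G - Tgt G" "u \<notin> VMin G" and d: "set_pmf d \<subseteq> {x. (u, x) \<in> Edg G}"
  shows "(\<Sum>x\<in>{x. (u, x) \<in> Edg G}. pmf d x * (real_of_int (wt G (u, x)) + \<phi> x)) \<le> \<phi> u - \<beta>"
proof -
  have "(\<Sum>x\<in>{x. (u, x) \<in> Edg G}. pmf d x * (real_of_int (wt G (u, x)) + \<phi> x))
      \<le> (\<Sum>x\<in>{x. (u, x) \<in> Edg G}. pmf d x * (\<phi> u - \<beta>))"
    using potential_decreases_along_edge[OF u(1)] u(2)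
    by (intro sum_mono mult_left_mono) (auto simp: algebra_simps)
  also have "\<dots> = \<phi> u - \<beta>"
    using sum_pmf_eq_1[OF finite_successors[OF well_formed] d] by (simp flip: sum_distrib_right)
  finally show ?thesis .
qed

lemma expected_step_Min:
  assumes u: "u \<in> Vs G - Tgt G" "u \<in> VMin G" and d: "set_pmf d \<subseteq> {x. (u, x) \<in> Edg G}"
    and s_edge: "(u, s u) \<in> Edg G" and p: "p \<le> pmf d (s u)"
    and trade_off: "(1 - p) * (W + (W + \<beta>) * real (card (Vs G)) + M) \<le> p * \<beta>"
  shows "(\<Sum>x\<in>{x. (u, x) \<in> Edg G}. pmf d x * (real_of_int (wt G (u, x)) + \<phi> x)) \<le> \<phi> u"
proof -
  define S where "S = {x. (u, x) \<in> Edg G}"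
  define B where "B = W + (W + \<beta>) * real (card (Vs G))"
  define q where "q = pmf d (s u)"
  define h where "h x = (if x = s u then \<phi> u - \<beta> else B)" for x
  have "real_of_int (wt G (u, x)) + \<phi> x \<le> h x" if "x \<in> S" for x
  proof (cases "x = s u")
    case True
    then show ?thesis
      using potential_decreases_along_edge[OF u(1), of x] that by (simp add: S_def h_def)
  next
    case False
    have "real_of_int (wt G (u, x)) \<le> W"
      using abs_wt_le_maxW[OF well_formed] that unfolding S_def by fastforce
    moreover have "\<phi> x \<le> (W + \<beta>) * real (card (Vs G))"
      using potential_le Edg_subset[OF well_formed] that unfolding S_def by blast
    ultimately show ?thesis using False by (simp add: h_def B_def)
  qed
  then have "(\<Sum>x\<in>S. pmf d x * (real_of_int (wt G (u, x)) + \<phi> x)) \<le> (\<Sum>x\<in>S. pmf d x * h x)"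
    by (intro sum_mono mult_left_mono) auto
  also have "\<dots> = q * (\<phi> u - \<beta>) + (1 - q) * B"
  proof -
    have S: "finite S" "s u \<in> S" using finite_successors[OF well_formed] s_edge by (simp_all add: S_def)
    have "(\<Sum>x\<in>S - {s u}. pmf d x) = 1 - q"
      using sum.remove[OF S, of "pmf d"] sum_pmf_eq_1[OF S(1) d[folded S_def]] by (simp add: q_def)
    then show ?thesis
      using sum.remove[OF S, of "\<lambda>x. pmf d x * h x"] by (simp add: h_def q_def flip: sum_distrib_right)
  qed
  also have "\<dots> \<le> \<phi> u"
    using mixture_le_if_trade_off[of p q M "\<phi> u" B \<beta>] p potential_ge[OF u(1)] \<beta>_pos M_nonneg
      maxW_nonneg[OF well_formed] trade_off
    by (simp add: q_def B_def pmf_le_1)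
  finally show ?thesis by (simp add: S_def)
qed

lemma exp_TP_rho_p_le_potential:
  assumes attr: "attractor_strategy G \<sigma>2" and v: "v \<in> Vs G" and p: "0 < p" "p < 1"
    and trade_off: "(1 - p) * (W + (W + \<beta>) * real (card (Vs G)) + M) \<le> p * \<beta>"
    and \<tau>: "ml_strat_Max G \<tau>"
  shows "exp_TP G (rho_p G s \<sigma>2 p) \<tau> v \<le> ereal (\<phi> v)"
proof -
  define D where "D = induced_kernel G (rho_p G s \<sigma>2 p) \<tau>"
  interpret terminating_chain G D
    unfolding D_def using terminating_chain_induced_kernel[OF well_formed NC attr p \<tau>] .
  have "0 \<le> (W + \<beta>) * real (card (Vs G))" using \<beta>_pos maxW_nonneg[OF well_formed] by simp
  then have \<phi>_bounded: "\<bar>\<phi> x\<bar> \<le> M + (W + \<beta>) * real (card (Vs G))"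
    if "x \<in> Vs G - Tgt G" for x
    using potential_ge[OF that] potential_le[of x] that M_nonneg by (auto simp: abs_le_iff)
  have drift: "(\<Sum>x\<in>succs u. pmf (D u) x * (real_of_int (wt G (u, x)) + \<phi> x)) \<le> \<phi> u"
    if u: "u \<in> Vs G - Tgt G" for u
  proof (cases "u \<in> VMin G")
    case True
    have "(u, s u) \<in> Edg G" using NC True by (simp add: NC_strategy_def md_strat_Min_def)
    moreover have "p \<le> pmf (D u) (s u)"
      using pmf_rho_p_ge[of p G s \<sigma>2 u] p True by (simp add: D_def induced_kernel_def)
    ultimately show ?thesis
      using expected_step_Min[OF u True D_supported[OF u] _ _ trade_off] by (simp add: succs_def)
  next
    case False
    then show ?thesis using expected_step_Max[OF u False D_supported[OF u]] \<beta>_pos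
      by (simp add: succs_def)
  qed
  have "exp_TP G (rho_p G s \<sigma>2 p) \<tau> v
      = ereal (infsum (\<lambda>xs. walk_prob D xs * real_of_int (path_weight G xs)) (plays v))"
    using infsum_walk_prob_plays[OF v] by (simp add: exp_TP_def path_prob_eq_walk_prob D_def)
  also have "\<dots> \<le> ereal (\<phi> v)"
    using expected_weight_le_potential[OF v potential_Tgt \<phi>_bounded drift] by simp
  finally show ?thesis .
qed

end

section \<open>Comparison with the switching strategy\<close>

lemma exp_TP_rho_p_le_Val_d:
  assumes wf: "well_formed G" and NC: "NC_strategy G \<sigma>1" and fake: "fake_optimal G \<sigma>1"
    and attr: "attractor_strategy G \<sigma>2" and v: "v \<in> Vs G"
    and R: "Val_d G v \<le> ereal R" and \<epsilon>: "0 < \<epsilon>"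
  shows "\<exists>p0<1. \<forall>p. p0 \<le> p \<and> p < 1 \<longrightarrow> 0 < p \<longrightarrow>
           (\<forall>\<tau>. ml_strat_Max G \<tau> \<longrightarrow> exp_TP G (rho_p G \<sigma>1 \<sigma>2 p) \<tau> v \<le> ereal (R + \<epsilon>))"
proof -
  \<comment> \<open>\<open>\<beta> * n \<le> min 1 \<epsilon>\<close> makes cycle cutting profitable and keeps the total bonus
    below \<open>\<epsilon>\<close>; \<open>M\<close> makes unfinished paths worth at most \<open>R\<close>; \<open>p0\<close> is where
    \<open>(1 - p) * B \<le> p * \<beta>\<close> starts to hold.\<close>
  define n where "n = real (card (Vs G))"
  define W where "W = real_of_int (maxW G)"
  define \<beta> where "\<beta> = min 1 \<epsilon> / (n + 1)"
  define M where "M = max 0 ((W + \<beta>) * n - R)"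
  define B where "B = W + (W + \<beta>) * n + M"
  define p0 where "p0 = 1 - \<beta> / (B + \<beta>)"
  have "0 \<le> n" "0 \<le> W" "0 < \<beta>" "0 \<le> M"
    using \<epsilon> maxW_nonneg[OF wf] by (auto simp: n_def W_def \<beta>_def M_def)
  then have "0 \<le> B" by (simp add: B_def)
  have "\<beta> * n = min 1 \<epsilon> * (n / (n + 1))" by (simp add: \<beta>_def)
  also have "\<dots> \<le> min 1 \<epsilon>"
    using \<open>0 \<le> n\<close> \<epsilon> mult_left_mono[of "n / (n + 1)" 1 "min 1 \<epsilon>"] by simp
  finally have \<beta>_n: "\<beta> * n \<le> min 1 \<epsilon>" .
  interpret nc_potential G \<sigma>1 \<beta> M
    using wf NC \<open>0 < \<beta>\<close> \<beta>_n \<open>0 \<le> M\<close> by unfold_locales (auto simp: n_def)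
  have "p0 < 1" using \<open>0 < \<beta>\<close> \<open>0 \<le> B\<close> by (simp add: p0_def)
  moreover have "exp_TP G (rho_p G \<sigma>1 \<sigma>2 p) \<tau> v \<le> ereal (R + \<epsilon>)"
    if p: "p0 \<le> p" "p < 1" "0 < p" and \<tau>: "ml_strat_Max G \<tau>" for p \<tau>
  proof -
    have "1 - p \<le> \<beta> / (B + \<beta>)" using p(1) by (simp add: p0_def)
    then have "(1 - p) * (B + \<beta>) \<le> \<beta>"
      using \<open>0 < \<beta>\<close> \<open>0 \<le> B\<close> by (simp add: pos_le_divide_eq)
    then have "(1 - p) * B \<le> p * \<beta>" by (simp add: algebra_simps)
    then have "exp_TP G (rho_p G \<sigma>1 \<sigma>2 p) \<tau> v \<le> ereal (\<phi> v)"
      using exp_TP_rho_p_le_potential[OF attr v p(3,2) _ \<tau>] by (simp add: B_def W_def n_def)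
    also have "\<phi> v \<le> R + \<beta> * n"
      using potential_le_Val_d[OF v fake R] by (simp add: M_def W_def n_def)
    finally show ?thesis using \<beta>_n by (simp add: order_trans)
  qed
  ultimately show ?thesis by blast
qed

lemma det_strat_Min_switching:
  "md_strat_Min G \<sigma>1 \<Longrightarrow> md_strat_Min G \<sigma>2 \<Longrightarrow> det_strat_Min G (switching \<sigma>1 \<sigma>2 \<alpha>)"
  unfolding det_strat_Min_def switching_def md_strat_Min_def by auto

lemma Val_strat_neq_MInfty:
  assumes "well_formed G"
  shows "Val_strat G \<sigma> v \<noteq> - \<infinity>"
proof -
  define \<tau> where "\<tau> h = (SOME x. (last h, x) \<in> Edg G)" for h :: "'a list"
  have "det_strat_Max G \<tau>"
    unfolding det_strat_Max_def
  proof (intro allI impI)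
    fix h :: "'a list" assume "h \<noteq> []" "last h \<in> VMax G"
    then have "\<exists>x. (last h, x) \<in> Edg G" using assms by (auto simp: well_formed_def Vs_def)
    then show "(last h, \<tau> h) \<in> Edg G" unfolding \<tau>_def by (rule someI_ex)
  qed
  then have "TP_out G v \<sigma> \<tau> \<le> Val_strat G \<sigma> v"
    unfolding Val_strat_def by (intro SUP_upper) simp
  moreover have "TP_out G v \<sigma> \<tau> \<noteq> - \<infinity>" by (simp add: TP_out_def)
  ultimately show ?thesis by auto
qed

theorem proposition10:
  fixes G :: "'v spgame" and \<sigma>1 \<sigma>2 :: "'v \<Rightarrow> 'v" and n :: nat and v0 :: 'v
  assumes "well_formed G"
    and "\<forall>v \<in> Vs G. Val_d G v \<noteq> \<infinity>"
    and "\<forall>v \<in> Vs G. Val_m_bar G v \<noteq> \<infinity>"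
    and "NC_strategy G \<sigma>1" and "fake_optimal G \<sigma>1"
    and "attractor_strategy G \<sigma>2"
    and "v0 \<in> Vs G"
  shows "\<exists>\<epsilon>0 > 0. \<forall>\<epsilon>. 0 < \<epsilon> \<and> \<epsilon> < \<epsilon>0 \<longrightarrow>
           (\<exists>p0 < 1. \<forall>p. p0 \<le> p \<and> p < 1 \<longrightarrow> 0 < p \<longrightarrow>
              (\<forall>\<tau>. ml_strat_Max G \<tau> \<longrightarrow>
                 exp_TP G (rho_p G \<sigma>1 \<sigma>2 p) \<tau> v0
                   \<le> Val_strat G (switching \<sigma>1 \<sigma>2
                         (nat ((2 * maxW G * (int (card (Vs G)) - 1) + int n) * int (card (Vs G)) + 1)))
                       v0 + ereal \<epsilon>))"
proof -
  \<comment> \<open>The bound is proved against \<open>Val_d\<close>, which lies below the value of every deterministic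
    strategy.\<close>
  define \<sigma> where "\<sigma> = switching \<sigma>1 \<sigma>2
    (nat ((2 * maxW G * (int (card (Vs G)) - 1) + int n) * int (card (Vs G)) + 1))"
  have "det_strat_Min G \<sigma>"
    using assms(4,6) unfolding \<sigma>_def NC_strategy_def attractor_strategy_def
    by (intro det_strat_Min_switching) auto
  then have Val_d_le: "Val_d G v0 \<le> Val_strat G \<sigma> v0"
    unfolding Val_d_def by (intro INF_lower) simp
  have "\<exists>p0<1. \<forall>p. p0 \<le> p \<and> p < 1 \<longrightarrow> 0 < p \<longrightarrow> (\<forall>\<tau>. ml_strat_Max G \<tau> \<longrightarrow>
          exp_TP G (rho_p G \<sigma>1 \<sigma>2 p) \<tau> v0 \<le> Val_strat G \<sigma> v0 + ereal \<epsilon>)"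
    if "0 < \<epsilon>" for \<epsilon>
  proof (cases "Val_strat G \<sigma> v0")
    case (real R)
    then show ?thesis
      using exp_TP_rho_p_le_Val_d[OF assms(1,4,5,6,7) _ that, of R] Val_d_le by simp
  next
    case PInf
    then show ?thesis by (intro exI[of _ 0]) simp
  qed (simp add: Val_strat_neq_MInfty[OF assms(1)])
  then show ?thesis unfolding \<sigma>_def by (intro exI[of _ 1]) auto
qed

end
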